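(* Let $p\ge1$ and let $\kappa_{m+1/2}$, $m\in\mathbb Z$, be real, $p$-periodic in $m$. Consider a $p$-member ensemble on $N$ patches (cyclic patch index, spacing $H$), each patch with $n\ge1$ interior points (with $n$ arbitrary, not necessarily a multiple of $p$), with field values $u^I_{i,\ell}(t)$, $i=1,\dots,n$, $\ell=0,\dots,p-1$, evolving by $$d^2\partial_t u^I_{i,\ell}=\kappa_{i+\ell+\frac12}(u^I_{i+1,\ell}-u^I_{i,\ell})+\kappa_{i+\ell-\frac12}(u^I_{i-1,\ell}-u^I_{i,\ell}),$$ (subscripts of $\kappa$ modulo $p$). Let real scalar coefficients $\mathcal I^{IJ}_{n1},\mathcal I^{IJ}_{1n}$ satisfy $\mathcal I^{IJ}_{1n}=\mathcal I^{JI}_{n1}$ for all $I,J$ (as for the spectral or Lagrangian interpolation coefficients). Couple the patches across ensemble members by $$u^I_{0,m}=\sum_J\mathcal I^{IJ}_{1n}\,u^J_{n,(m-n)\bmod p},\qquad u^I_{n+1,m}=\sum_J\mathcal I^{IJ}_{n1}\,u^J_{1,(m+n)\bmod p},\qquad m=0,\dots,p-1,$$ so that each edge value is interpolated from a member whose corresponding next-to-edge diffusivity is the same. Then the resulting linear system $\partial_t\mathbf u=\mathcal L\mathbf u$ on all interior values $\mathbf u\in\mathbb R^{nNp}$ has a real symmetric (self-adjoint) matrix $\mathcal L$.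
   Context: Member $\ell$ of the ensemble is the heterogeneous lattice diffusion with diffusivities phase-shifted by $\ell$: in member $\ell$, the diffusivity between lattice points $i$ and $i+1$ is $\kappa_{i+\ell+1/2}$; thus the left-edge diffusivity of member $m$ is $\kappa_{m+1/2}$ and the right-edge diffusivity of member $m$ is $\kappa_{n+m+1/2}$. *)

theory Defs
  imports Main Complex_Main
begin

text \<open>Patches are indexed by I < N, interior points by 1 \<le> i \<le> n,
ensemble members by l < p.  A field state is u :: nat \<times> nat \<times> nat \<Rightarrow> real,
u (I, i, l) = u^I_{i,l}.  The diffusivity kappa_{m+1/2} is written kap m (m :: int).\<close>

definition interior_idx :: "nat \<Rightarrow> nat \<Rightarrow> nat \<Rightarrow> (nat \<times> nat \<times> nat) set" where
  "interior_idx N n p = {(I, i, l). I < N \<and> 1 \<le> i \<and> i \<le> n \<and> l < p}"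

definition ext_val :: "nat \<Rightarrow> nat \<Rightarrow> nat \<Rightarrow> (nat \<Rightarrow> nat \<Rightarrow> real) \<Rightarrow> (nat \<Rightarrow> nat \<Rightarrow> real)
    \<Rightarrow> (nat \<times> nat \<times> nat \<Rightarrow> real) \<Rightarrow> nat \<Rightarrow> nat \<Rightarrow> nat \<Rightarrow> real" where
  "ext_val N n p C1n Cn1 u I i m =
     (if i = 0 then (\<Sum>J<N. C1n I J * u (J, n, nat ((int m - int n) mod int p)))
      else if i = n + 1 then (\<Sum>J<N. Cn1 I J * u (J, 1, nat ((int m + int n) mod int p)))
      else u (I, i, m))"

definition ens_rhs :: "nat \<Rightarrow> nat \<Rightarrow> nat \<Rightarrow> real \<Rightarrow> (int \<Rightarrow> real) \<Rightarrow> (nat \<Rightarrow> nat \<Rightarrow> real)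
    \<Rightarrow> (nat \<Rightarrow> nat \<Rightarrow> real) \<Rightarrow> (nat \<times> nat \<times> nat \<Rightarrow> real) \<Rightarrow> nat \<times> nat \<times> nat \<Rightarrow> real" where
  "ens_rhs N n p d kap C1n Cn1 u x =
     (case x of (I, i, l) \<Rightarrow>
       (kap (int i + int l) * (ext_val N n p C1n Cn1 u I (i + 1) l - u (I, i, l))
        + kap (int i + int l - 1) * (ext_val N n p C1n Cn1 u I (i - 1) l - u (I, i, l))) / d\<^sup>2)"

end

theory Submission
  imports Defs
begin

text \<open>The right-hand side is linear in the state and reads only interior values, so it is given
by the matrix whose column y is the right-hand side of the unit state at y.  Symmetry of this
matrix is a statement about the coupling of neighbouring points: interior neighbours are
coupled through the same diffusivity in both directions, and an edge point i = n of member l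
is coupled to the point j = 1 of member (l + n) mod p, whose left diffusivity
kappa_{(l+n) mod p + 1/2} equals kappa_{n + l + 1/2} by periodicity, with coefficients
Cn1 I J = C1n J I.\<close>

lemma periodic_add_mult:
  fixes f :: "int \<Rightarrow> 'a"
  assumes per: "\<And>m. f (m + c) = f m"
  shows "f (a + k * c) = f a"
proof (induction k rule: int_induct[where k = 0])
  case (step1 k)
  then show ?case using per[of "a + k * c"] by (simp add: algebra_simps)
next
  case (step2 k)
  then show ?case using per[of "a + (k - 1) * c"] by (simp add: algebra_simps)
qed simp

lemma periodic_mod:
  fixes f :: "int \<Rightarrow> 'a"
  assumes "\<And>m. f (m + c) = f m"
  shows "f (a mod c) = f a"
  using periodic_add_mult[where f = f, OF assms, of "a mod c" "a div c"] by simp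

lemma shift_mod_eq_iff:
  fixes l m n p :: nat
  assumes "l < p" "m < p"
  shows "m = nat ((int l + int n) mod int p) \<longleftrightarrow> l = nat ((int m - int n) mod int p)"
proof
  assume "m = nat ((int l + int n) mod int p)"
  then have "int m = (int l + int n) mod int p" using assms by simp
  then have "(int m - int n) mod int p = int l mod int p"
    by (metis add_diff_cancel_right' mod_diff_left_eq)
  then show "l = nat ((int m - int n) mod int p)" using assms(1) by simp
next
  assume "l = nat ((int m - int n) mod int p)"
  then have "int l = (int m - int n) mod int p" using assms by simp
  then have "(int l + int n) mod int p = int m mod int p"
    by (metis diff_add_cancel mod_add_left_eq)
  then show "m = nat ((int l + int n) mod int p)" using assms(2) by simp
qed

lemma finite_interior_idx: "finite (interior_idx N n p)"
proof (rule finite_subset)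
  show "interior_idx N n p \<subseteq> {..<N} \<times> {..n} \<times> {..<p}"
    by (auto simp: interior_idx_def)
qed auto

lemma ens_rhs_sum:
  assumes "finite S"
  shows "ens_rhs N n p d kap C1n Cn1 (\<lambda>z. \<Sum>y\<in>S. c y * f y z) x
       = (\<Sum>y\<in>S. c y * ens_rhs N n p d kap C1n Cn1 (f y) x)"
proof -
  obtain I i l where x: "x = (I, i, l)" by (cases x)
  have ext: "ext_val N n p C1n Cn1 (\<lambda>z. \<Sum>y\<in>S. c y * f y z) I k l
     = (\<Sum>y\<in>S. c y * ext_val N n p C1n Cn1 (f y) I k l)" for k
    by (simp add: ext_val_def sum_distrib_left sum_distrib_right sum.swap[of _ "{..<N}"] mult_ac)
  let ?a = "\<lambda>y. kap (int i + int l) * (ext_val N n p C1n Cn1 (f y) I (i + 1) l - f y (I, i, l))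
     + kap (int i + int l - 1) * (ext_val N n p C1n Cn1 (f y) I (i - 1) l - f y (I, i, l))"
  have "ens_rhs N n p d kap C1n Cn1 (\<lambda>z. \<Sum>y\<in>S. c y * f y z) x = (\<Sum>y\<in>S. c y * ?a y) / d\<^sup>2"
    unfolding x ens_rhs_def
    by (simp add: ext sum_distrib_left sum_subtractf[symmetric] sum.distrib[symmetric] algebra_simps)
  then show ?thesis
    unfolding x ens_rhs_def by (simp add: sum_divide_distrib)
qed

lemma ens_rhs_cong_interior:
  assumes uv: "\<And>z. z \<in> interior_idx N n p \<Longrightarrow> u z = v z" and x: "x \<in> interior_idx N n p"
  shows "ens_rhs N n p d kap C1n Cn1 u x = ens_rhs N n p d kap C1n Cn1 v x"
proof -
  obtain I i l where x_eq: "x = (I, i, l)" by (cases x)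
  with x have I: "I < N" and i: "1 \<le> i" "i \<le> n" and l: "l < p"
    by (auto simp: interior_idx_def)
  have member_lt: "nat ((int a - int n) mod int p) < p" "nat ((int a + int n) mod int p) < p" for a
    using l by (simp_all add: nat_less_iff)
  have "ext_val N n p C1n Cn1 u I k l = ext_val N n p C1n Cn1 v I k l" if "k \<le> n + 1" for k
    unfolding ext_val_def using that I i l member_lt
    by (auto intro!: sum.cong arg_cong2[where f = "(*)"] uv simp: interior_idx_def)
  moreover have "u x = v x" using uv x by blast
  ultimately show ?thesis unfolding x_eq ens_rhs_def using i by simp
qed

definition unit_state :: "nat \<times> nat \<times> nat \<Rightarrow> nat \<times> nat \<times> nat \<Rightarrow> real" where
  "unit_state y z = (if z = y then 1 else 0)"

lemma ens_rhs_eq_matrix_sum: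
  assumes "x \<in> interior_idx N n p"
  shows "ens_rhs N n p d kap C1n Cn1 u x
       = (\<Sum>y\<in>interior_idx N n p. ens_rhs N n p d kap C1n Cn1 (unit_state y) x * u y)"
proof -
  have "ens_rhs N n p d kap C1n Cn1 u x
      = ens_rhs N n p d kap C1n Cn1 (\<lambda>z. \<Sum>y\<in>interior_idx N n p. u y * unit_state y z) x"
    using assms finite_interior_idx
    by (intro ens_rhs_cong_interior)
       (auto simp: unit_state_def if_distrib[of "(*) _"] sum.delta cong: if_cong)
  also have "\<dots> = (\<Sum>y\<in>interior_idx N n p. u y * ens_rhs N n p d kap C1n Cn1 (unit_state y) x)"
    by (rule ens_rhs_sum[OF finite_interior_idx])
  finally show ?thesis by (simp add: mult_ac)
qed

lemma ext_val_unit_state_succ: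
  assumes "1 \<le> i" "i \<le> n" "J < N"
  shows "ext_val N n p C1n Cn1 (unit_state (J, j, m)) I (i + 1) l
       = (if i = n then (if j = 1 \<and> m = nat ((int l + int n) mod int p) then Cn1 I J else 0)
          else unit_state (J, j, m) (I, i + 1, l))"
  using assms
  by (auto simp: ext_val_def unit_state_def if_distrib[of "(*) _"] sum.delta cong: if_cong)

lemma ext_val_unit_state_pred:
  assumes "1 \<le> j" "j \<le> n" "I < N"
  shows "ext_val N n p C1n Cn1 (unit_state (I, i, l)) J (j - 1) m
       = (if j = 1 then (if i = n \<and> l = nat ((int m - int n) mod int p) then C1n J I else 0)
          else unit_state (I, i, l) (J, j - 1, m))"
  using assms
  by (auto simp: ext_val_def unit_state_def if_distrib[of "(*) _"] sum.delta cong: if_cong)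

lemma right_coupling_eq_left_coupling:
  assumes per: "\<And>m. kap (m + int p) = kap m"
    and C: "\<And>I J. I < N \<Longrightarrow> J < N \<Longrightarrow> C1n I J = Cn1 J I"
    and x: "(I, i, l) \<in> interior_idx N n p" and y: "(J, j, m) \<in> interior_idx N n p"
  shows "kap (int i + int l) * ext_val N n p C1n Cn1 (unit_state (J, j, m)) I (i + 1) l
       = kap (int j + int m - 1) * ext_val N n p C1n Cn1 (unit_state (I, i, l)) J (j - 1) m"
proof -
  from x have I: "I < N" "1 \<le> i" "i \<le> n" "l < p" by (auto simp: interior_idx_def)
  from y have J: "J < N" "1 \<le> j" "j \<le> n" "m < p" by (auto simp: interior_idx_def)
  note shift = shift_mod_eq_iff[OF I(4) J(4), of n]
  show ?thesis
  proof (cases "i = n \<and> j = 1 \<and> m = nat ((int l + int n) mod int p)")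
    case True
    then have ij: "i = n" "j = 1" by simp_all
    from True have "int m = (int l + int n) mod int p" using I(4) by simp
    then have kap_eq: "kap (int j + int m - 1) = kap (int i + int l)"
      using True periodic_mod[of kap "int p", OF per] by (simp add: add.commute)
    have "l = nat ((int m - int n) mod int p)" using True shift by blast
    then have "ext_val N n p C1n Cn1 (unit_state (I, i, l)) J (j - 1) m = Cn1 I J"
      unfolding ext_val_unit_state_pred[OF J(2,3) I(1)] using ij C[OF J(1) I(1)] by simp
    moreover have "ext_val N n p C1n Cn1 (unit_state (J, j, m)) I (i + 1) l = Cn1 I J"
      unfolding ext_val_unit_state_succ[OF I(2,3) J(1)] using True by simp
    ultimately show ?thesis using kap_eq by simp
  next
    case False
    have "ext_val N n p C1n Cn1 (unit_state (J, j, m)) I (i + 1) l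
        = (if i = n then 0 else unit_state (J, j, m) (I, i + 1, l))"
      unfolding ext_val_unit_state_succ[OF I(2,3) J(1)] using False by auto
    moreover have "ext_val N n p C1n Cn1 (unit_state (I, i, l)) J (j - 1) m
        = (if j = 1 then 0 else unit_state (I, i, l) (J, j - 1, m))"
      unfolding ext_val_unit_state_pred[OF J(2,3) I(1)] using False shift by auto
    ultimately show ?thesis
      using I(2,3) J(2,3) by (auto simp: unit_state_def)
  qed
qed

lemma ens_rhs_unit_state_sym:
  assumes per: "\<And>m. kap (m + int p) = kap m"
    and C: "\<And>I J. I < N \<Longrightarrow> J < N \<Longrightarrow> C1n I J = Cn1 J I"
    and x: "x \<in> interior_idx N n p" and y: "y \<in> interior_idx N n p"
  shows "ens_rhs N n p d kap C1n Cn1 (unit_state y) x = ens_rhs N n p d kap C1n Cn1 (unit_state x) y"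
proof (cases "x = y")
  case False
  obtain I i l where x_eq: "x = (I, i, l)" by (cases x)
  obtain J j m where y_eq: "y = (J, j, m)" by (cases y)
  have "unit_state y x = 0" "unit_state x y = 0"
    using False by (auto simp: unit_state_def)
  moreover note right_coupling_eq_left_coupling[of kap p N C1n Cn1 I i l n J j m, OF per C]
    right_coupling_eq_left_coupling[of kap p N C1n Cn1 J j m n I i l, OF per C]
  ultimately show ?thesis
    using x y unfolding x_eq y_eq ens_rhs_def by (simp add: add.commute)
qed simp

theorem mainTheorem3:
  fixes N n p :: nat and d :: real and kap :: "int \<Rightarrow> real"
    and C1n Cn1 :: "nat \<Rightarrow> nat \<Rightarrow> real"
  assumes "p \<ge> 1" and "n \<ge> 1" and "N \<ge> 1" and "d > 0"
    and "\<And>m. kap (m + int p) = kap m"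
    and "\<And>I J. I < N \<Longrightarrow> J < N \<Longrightarrow> C1n I J = Cn1 J I"
  shows "\<exists>L :: nat \<times> nat \<times> nat \<Rightarrow> nat \<times> nat \<times> nat \<Rightarrow> real.
           (\<forall>u. \<forall>x\<in>interior_idx N n p.
              ens_rhs N n p d kap C1n Cn1 u x = (\<Sum>y\<in>interior_idx N n p. L x y * u y))
         \<and> (\<forall>x\<in>interior_idx N n p. \<forall>y\<in>interior_idx N n p. L x y = L y x)"
proof (intro exI conjI ballI allI)
  let ?L = "\<lambda>x y. ens_rhs N n p d kap C1n Cn1 (unit_state y) x"
  show "ens_rhs N n p d kap C1n Cn1 u x = (\<Sum>y\<in>interior_idx N n p. ?L x y * u y)"
    if "x \<in> interior_idx N n p" for u x
    using ens_rhs_eq_matrix_sum[OF that] .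
  show "?L x y = ?L y x" if "x \<in> interior_idx N n p" "y \<in> interior_idx N n p" for x y
    using ens_rhs_unit_state_sym[of kap p N C1n Cn1 x n y d, OF assms(5,6) that] .
qed

end
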